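(* Let $F$ be an imaginary cyclic sextic field. Let $x,y,z\in\mathbb{R}$ with $x+y+z=0$, $u=(e^x,e^y,e^z)$, and $\|w\|^2=2(x^2+y^2+z^2)$. If $\|w\|^2\in(0,0.24163^2)$, then $T_1(u)<-98.4664\cdot 10^{-9}\cdot\#\mu_F$.
   Context: $F$ is a totally imaginary number field Galois over $\mathbb{Q}$ with cyclic Galois group $\langle\tau\rangle$ of order 6, embeddings $\tau_1=\mathrm{id},\tau_2=\tau,\tau_3=\tau^2$, ring of integers $O_F$, roots of unity $\mu_F$, and $\|f\|^2=2\sum_{i=1}^3|\tau_i(f)|^2$. For $f\in O_F$ let $f_i=|\tau_i(f)|$ and $G_1(u,f)=\exp\!\big(-2\pi[(e^{2x}-1)f_1^2+(e^{2y}-1)f_2^2+(e^{2z}-1)f_3^2]\big)-1$; $G_2(u,f)=G_1(u,\tau_1(f))+G_1(u,\tau_2(f))+G_1(u,\tau_3(f))$; $G(u,f)=e^{-\pi\|f\|^2}G_2(u,f)/\|w\|^2$. Then $T_1(u)=\sum_{f\in\mu_F}G(u,f)=\#\mu_F\cdot G(u,1)$. *)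

theory Defs
  imports "HOL-Analysis.Analysis"
begin

definition is_subfield :: "complex set \<Rightarrow> bool" where
  "is_subfield F \<longleftrightarrow> 0 \<in> F \<and> 1 \<in> F \<and>
     (\<forall>a\<in>F. \<forall>b\<in>F. a + b \<in> F \<and> a - b \<in> F \<and> a * b \<in> F) \<and>
     (\<forall>a\<in>F. a \<noteq> 0 \<longrightarrow> inverse a \<in> F)"

definition is_field_aut :: "complex set \<Rightarrow> (complex \<Rightarrow> complex) \<Rightarrow> bool" where
  "is_field_aut F s \<longleftrightarrow> bij_betw s F F \<and>
     (\<forall>a\<in>F. \<forall>b\<in>F. s (a + b) = s a + s b \<and> s (a * b) = s a * s b) \<and> s 1 = 1"

definition degree_over_Q :: "complex set \<Rightarrow> nat \<Rightarrow> bool" where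
  "degree_over_Q F d \<longleftrightarrow> (\<exists>b :: nat \<Rightarrow> complex. (\<forall>i<d. b i \<in> F) \<and>
     (\<forall>f\<in>F. \<exists>!c :: nat \<Rightarrow> rat. (\<forall>i\<ge>d. c i = 0) \<and> f = (\<Sum>i<d. of_rat (c i) * b i)))"

text \<open>Since F is normal,
  every embedding has image F, so totally imaginary means F is not contained in R.\<close>
definition imag_cyclic_sextic :: "complex set \<Rightarrow> (complex \<Rightarrow> complex) \<Rightarrow> bool" where
  "imag_cyclic_sextic F \<tau> \<longleftrightarrow> is_subfield F \<and> degree_over_Q F 6 \<and>
     is_field_aut F \<tau> \<and>
     (\<forall>f\<in>F. (\<tau> ^^ 6) f = f) \<and>
     (\<forall>k\<in>{1..5::nat}. \<exists>f\<in>F. (\<tau> ^^ k) f \<noteq> f) \<and>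
     (\<forall>\<sigma>. is_field_aut F \<sigma> \<longrightarrow> (\<exists>k<6. \<forall>f\<in>F. \<sigma> f = (\<tau> ^^ k) f)) \<and>
     (\<exists>f\<in>F. Im f \<noteq> 0)"

definition muF :: "complex set \<Rightarrow> complex set" where
  "muF F = {f \<in> F. \<exists>n::nat. n > 0 \<and> f ^ n = 1}"

definition emb :: "(complex \<Rightarrow> complex) \<Rightarrow> nat \<Rightarrow> complex \<Rightarrow> complex" where
  "emb \<tau> i = \<tau> ^^ (i - 1)"

definition normsq :: "(complex \<Rightarrow> complex) \<Rightarrow> complex \<Rightarrow> real" where
  "normsq \<tau> f = 2 * (\<Sum>i\<in>{1..3}. (cmod (emb \<tau> i f))\<^sup>2)"

definition wnormsq :: "real \<Rightarrow> real \<Rightarrow> real \<Rightarrow> real" where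
  "wnormsq x y z = 2 * (x\<^sup>2 + y\<^sup>2 + z\<^sup>2)"

text \<open>G_1(u,f) with u = (e^x, e^y, e^z).\<close>
definition G1 :: "(complex \<Rightarrow> complex) \<Rightarrow> real \<Rightarrow> real \<Rightarrow> real \<Rightarrow> complex \<Rightarrow> real" where
  "G1 \<tau> x y z f = exp (- 2 * pi * ((exp (2*x) - 1) * (cmod (emb \<tau> 1 f))\<^sup>2
        + (exp (2*y) - 1) * (cmod (emb \<tau> 2 f))\<^sup>2 + (exp (2*z) - 1) * (cmod (emb \<tau> 3 f))\<^sup>2)) - 1"

definition G2 :: "(complex \<Rightarrow> complex) \<Rightarrow> real \<Rightarrow> real \<Rightarrow> real \<Rightarrow> complex \<Rightarrow> real" where
  "G2 \<tau> x y z f = G1 \<tau> x y z (emb \<tau> 1 f) + G1 \<tau> x y z (emb \<tau> 2 f) + G1 \<tau> x y z (emb \<tau> 3 f)"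

definition G :: "(complex \<Rightarrow> complex) \<Rightarrow> real \<Rightarrow> real \<Rightarrow> real \<Rightarrow> complex \<Rightarrow> real" where
  "G \<tau> x y z f = exp (- pi * normsq \<tau> f) * G2 \<tau> x y z f / wnormsq x y z"

definition T1 :: "complex set \<Rightarrow> (complex \<Rightarrow> complex) \<Rightarrow> real \<Rightarrow> real \<Rightarrow> real \<Rightarrow> real" where
  "T1 F \<tau> x y z = (\<Sum>f\<in>muF F. G \<tau> x y z f)"

end

theory Submission
  imports Defs "Berlekamp_Zassenhaus.Factor_Bound"
begin

(* Every conjugate tau^k f of a root of unity f has modulus 1, so all summands of T_1 equal
   c = 3 exp(-6 pi) (exp(-2 pi S) - 1) / ||w||^2  with  S = sum_i (exp(2 x_i) - 1),
   and T_1 = #mu_F * c.  As x + y + z = 0, the cubic Taylor bound gives S >= ||w||^2 + 4xyz,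
   and |xyz| <= (P^3/54)^(1/2) with P = ||w||^2/2 turns this into S >= 0.953 ||w||^2 for small w;
   the quartic Taylor bound for exp(-u) and a lower bound for exp(-6 pi) then give
   c < -98.4664 * 10^-9.  The inequality for T_1 is strict because mu_F is finite and contains 1:
   a root of unity of the sextic field F is a root of a nonzero integer polynomial of degree at
   most 6 dividing X^n - 1, whose Mahler measure is at most ||X^n - 1||_2 = sqrt 2, so Mignotte's
   bound leaves only finitely many such polynomials. *)

section \<open>Numerical estimates\<close>

lemma exp_ge_cubic_Taylor: "1 + t + t^2/2 + t^3/6 \<le> exp (t :: real)"
proof -
  obtain s where s: "exp t = (\<Sum>m<4. t ^ m / fact m) + exp s / fact 4 * t ^ 4"
    using Maclaurin_exp_le[of t 4] by blast
  have "(\<Sum>m<4. t ^ m / fact m) = 1 + t + t^2/2 + t^3/6"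
    by (simp add: eval_nat_numeral fact_numeral)
  moreover have "exp s / fact 4 * t ^ 4 \<ge> 0" by (simp add: zero_le_even_power)
  ultimately show ?thesis using s by linarith
qed

lemma exp_minus_le_quartic_Taylor:
  assumes "(0 :: real) \<le> u"
  shows "exp (-u) \<le> 1 - u + u^2/2 - u^3/6 + u^4/24"
proof -
  obtain s where s: "exp (-u) = (\<Sum>m<5. (-u) ^ m / fact m) + exp s / fact 5 * (-u) ^ 5"
    using Maclaurin_exp_le[of "-u" 5] by blast
  have "(\<Sum>m<5. (-u) ^ m / fact m) = 1 - u + u^2/2 - u^3/6 + u^4/24"
    by (simp add: eval_nat_numeral fact_numeral)
  moreover have "exp s / fact 5 * (-u) ^ 5 \<le> 0"
    using assms by (simp add: mult_nonneg_nonpos)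
  ultimately show ?thesis using s by linarith
qed

lemma exp_minus_6pi_ge: "6.5 * 10 powi (-9) \<le> exp (- pi * 6)"
proof -
  \<comment> \<open>\<open>t\<close> is \<open>6 pi / 32\<close> rounded up\<close>
  define t :: real where "t = 0.5890486225482"
  obtain s where s: "exp (-t) = (\<Sum>m<8. (-t) ^ m / fact m) + exp s / fact 8 * (-t) ^ 8"
    using Maclaurin_exp_le[of "-t" 8] by blast
  have "0.55485 \<le> (\<Sum>m<8. (-t) ^ m / fact m)"
    unfolding t_def by (simp add: eval_nat_numeral fact_numeral)
  moreover have "exp s / fact 8 * (-t) ^ 8 \<ge> 0" by (simp add: zero_le_even_power)
  ultimately have exp_t: "0.55485 \<le> exp (-t)" using s by linarith
  have "6.5 * 10 powi (-9) \<le> (0.55485 :: real) ^ 32" by (simp add: power_int_def power_divide)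
  also have "\<dots> \<le> exp (-t) ^ 32" using exp_t by (intro power_mono) auto
  also have "\<dots> = exp (- (32 * t))" by (simp flip: exp_of_nat_mult)
  also have "\<dots> \<le> exp (- pi * 6)" using pi_approx(2) unfolding t_def by simp
  finally show ?thesis .
qed

lemma sum_exp_double_minus_one_ge_cubic:
  fixes x y z :: real
  assumes "x + y + z = 0"
  shows "2 * (x^2 + y^2 + z^2) + 4 * (x * y * z)
           \<le> (exp (2*x) - 1) + (exp (2*y) - 1) + (exp (2*z) - 1)"
proof -
  have z: "z = - x - y" using assms by linarith
  have identity: "(2*x + (2*x)^2/2 + (2*x)^3/6) + (2*y + (2*y)^2/2 + (2*y)^3/6) + (2*z + (2*z)^2/2 + (2*z)^3/6)
      = 2 * (x^2 + y^2 + z^2) + 4 * (x * y * z)"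
    unfolding z by (simp add: field_simps power2_eq_square power3_eq_cube)
  have Taylor: "1 + 2*t + (2*t)^2/2 + (2*t)^3/6 \<le> exp (2*t)" for t :: real
    using exp_ge_cubic_Taylor[of "2*t"] by simp
  show ?thesis using identity Taylor[of x] Taylor[of y] Taylor[of z] by linarith
qed

lemma product_sq_le_sum_squares_cube:
  fixes x y z :: real
  assumes "x + y + z = 0"
  shows "54 * (x * y * z)^2 \<le> (x^2 + y^2 + z^2)^3"
proof -
  have z: "z = - x - y" using assms by linarith
  have "(x^2 + y^2 + z^2)^3 - 54 * (x * y * z)^2 = 2 * ((x - y) * (y - z) * (z - x))^2"
    unfolding z by (simp add: field_simps power2_eq_square power3_eq_cube)
  then show ?thesis by (smt (verit) zero_le_power2)
qed

lemma sum_exp_double_minus_one_ge_wnormsq: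
  fixes x y z :: real
  assumes "x + y + z = 0" and "wnormsq x y z < 0.24163 ^ 2"
  shows "0.953 * wnormsq x y z \<le> (exp (2*x) - 1) + (exp (2*y) - 1) + (exp (2*z) - 1)"
proof -
  define P where "P = x^2 + y^2 + z^2"
  define q where "q = x * y * z"
  have W: "wnormsq x y z = 2 * P" unfolding wnormsq_def P_def by simp
  have P_nonneg: "0 \<le> P" unfolding P_def by simp
  have P_small: "P \<le> 0.0292" using W assms(2) by (simp add: power2_eq_square)
  have "54 * q^2 \<le> P * P^2"
    using product_sq_le_sum_squares_cube[OF assms(1)] by (simp add: P_def q_def power3_eq_cube power2_eq_square)
  also have "\<dots> \<le> 0.0292 * P^2" using P_small by (rule mult_right_mono) simp
  finally have "q^2 \<le> 0.00055225 * P^2" by simp (use zero_le_power2[of P] in linarith)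
  also have "\<dots> = (0.0235 * P)^2" by (simp add: power2_eq_square)
  finally have "\<bar>q\<bar> \<le> \<bar>0.0235 * P\<bar>" by (simp only: abs_le_square_iff)
  then have "- 0.0235 * P \<le> q" using P_nonneg by simp
  moreover have "2 * P + 4 * q \<le> (exp (2*x) - 1) + (exp (2*y) - 1) + (exp (2*z) - 1)"
    using sum_exp_double_minus_one_ge_cubic[OF assms(1)] by (simp add: P_def q_def)
  ultimately show ?thesis using W by simp
qed

lemma exp_minus_sub_one_le:
  fixes u :: real
  assumes "0 \<le> u" and "u \<le> 0.3498"
  shows "exp (-u) - 1 \<le> - 0.84365 * u"
proof -
  define U :: real where "U = 0.3498"
  define h where "h v = 1 - v/2 + v^2/6 - v^3/24" for v :: real
  have Taylor: "exp (-u) - 1 \<le> - (h u * u)"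
    using exp_minus_le_quartic_Taylor[OF assms(1)]
    by (simp add: h_def algebra_simps power2_eq_square power3_eq_cube power4_eq_xxxx)
  have h_bound: "0.84365 \<le> h u"
  proof -
    \<comment> \<open>\<open>h\<close> is decreasing on \<open>[0, U]\<close>\<close>
    have "h u - h U = (U - u) * (1/2 - (u + U)/6 + (u^2 + u * U + U^2)/24)"
      by (simp add: h_def field_simps power2_eq_square power3_eq_cube)
    moreover have "0 \<le> (U - u) * (1/2 - (u + U)/6 + (u^2 + u * U + U^2)/24)"
      using assms unfolding U_def by (intro mult_nonneg_nonneg) auto
    moreover have "0.84365 \<le> h U" unfolding h_def U_def by (simp add: power_divide)
    ultimately show ?thesis by linarith
  qed
  have "0.84365 * u \<le> h u * u" using h_bound assms(1) by (rule mult_right_mono)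
  then show ?thesis using Taylor by linarith
qed

text \<open>The common value of \<open>G(u, f)\<close> at all roots of unity \<open>f\<close>.\<close>

definition G_root_of_unity :: "real \<Rightarrow> real \<Rightarrow> real \<Rightarrow> real" where
  "G_root_of_unity x y z = exp (- pi * 6)
     * (3 * (exp (- 2 * pi * ((exp (2*x) - 1) + (exp (2*y) - 1) + (exp (2*z) - 1))) - 1))
     / wnormsq x y z"

lemma G_root_of_unity_lt:
  fixes x y z :: real
  assumes "x + y + z = 0" and "0 < wnormsq x y z" and "wnormsq x y z < 0.24163 ^ 2"
  shows "G_root_of_unity x y z < - 98.4664 * 10 powi (-9)"
proof -
  define W where "W = wnormsq x y z"
  define S where "S = (exp (2*x) - 1) + (exp (2*y) - 1) + (exp (2*z) - 1)"
  define u where "u = 2 * pi * 0.953 * W"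
  have W_pos: "0 < W" and W_small: "W \<le> 0.0583850569"
    using assms(2,3) by (simp_all add: W_def power2_eq_square)
  have "pi * W \<le> 3.1415926535899 * 0.0583850569"
    using pi_approx(2) W_small W_pos by (intro mult_mono) auto
  then have u_small: "u \<le> 0.3498" unfolding u_def by simp
  have u_nonneg: "0 \<le> u" unfolding u_def using W_pos by simp
  have "exp (- 2 * pi * S) \<le> exp (- u)"
    using sum_exp_double_minus_one_ge_wnormsq[OF assms(1,3)] unfolding u_def S_def W_def by simp
  then have "exp (- 2 * pi * S) - 1 \<le> - 0.84365 * u"
    using exp_minus_sub_one_le[OF u_nonneg u_small] by linarith
  then have "(exp (- 2 * pi * S) - 1) / W \<le> - 0.84365 * u / W"
    using W_pos by (intro divide_right_mono) auto
  also have "\<dots> = - (2 * pi * 0.953 * 0.84365)" unfolding u_def using W_pos by simp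
  also have "\<dots> \<le> - 5.0516" using pi_approx(1) by simp
  finally have ratio: "(exp (- 2 * pi * S) - 1) / W \<le> - 5.0516" .
  have "exp (- pi * 6) * (3 * (exp (- 2 * pi * S) - 1)) / W
      = 3 * exp (- pi * 6) * ((exp (- 2 * pi * S) - 1) / W)" by simp
  also have "\<dots> \<le> 3 * exp (- pi * 6) * (- 5.0516)"
    using ratio by (intro mult_left_mono) auto
  also have "\<dots> \<le> 3 * (6.5 * 10 powi (-9)) * (- 5.0516)" using exp_minus_6pi_ge by simp
  also have "\<dots> < - 98.4664 * 10 powi (-9)" by (simp add: power_int_def)
  finally show ?thesis unfolding G_root_of_unity_def S_def W_def .
qed

section \<open>Finiteness of the group of roots of unity\<close>

(* HOL-Algebra, imported through Factor_Bound, shadows coeff, monom and smult;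
   hence the qualified names for the polynomial operations below. *)

interpretation of_rat_poly_hom: map_poly_comm_ring_hom "of_rat :: rat \<Rightarrow> complex" ..

interpretation rat_vs: vector_space "\<lambda>(r :: rat) (z :: complex). of_rat r * z"
  by unfold_locales (simp_all add: algebra_simps of_rat_add of_rat_mult)

lemma degree_over_Q_dependent:
  assumes "degree_over_Q F d" and "S \<subseteq> F" and "finite S" and "card S > d"
  shows "rat_vs.dependent S"
proof -
  obtain b where b: "\<forall>f\<in>F. \<exists>!c :: nat \<Rightarrow> rat. (\<forall>i\<ge>d. c i = 0) \<and> f = (\<Sum>i<d. of_rat (c i) * b i)"
    using assms(1) unfolding degree_over_Q_def by blast
  have "F \<subseteq> rat_vs.span (b ` {..<d})"
  proof
    fix f assume "f \<in> F"
    then obtain c :: "nat \<Rightarrow> rat" where c: "f = (\<Sum>i<d. of_rat (c i) * b i)" using b by blast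
    show "f \<in> rat_vs.span (b ` {..<d})" unfolding c
      by (intro rat_vs.span_sum rat_vs.span_scale rat_vs.span_base) auto
  qed
  hence "rat_vs.dim S \<le> card (b ` {..<d})" using assms(2) by (intro rat_vs.dim_le_card) auto
  also have "\<dots> \<le> d" using card_image_le[of "{..<d}" b] by simp
  finally show ?thesis using assms(4) rat_vs.dim_eq_card_independent by fastforce
qed

lemma subfield_power_closed: "is_subfield F \<Longrightarrow> a \<in> F \<Longrightarrow> a ^ n \<in> F"
  by (induction n) (auto simp: is_subfield_def)

lemma degree_over_Q_rat_poly_root:
  assumes "is_subfield F" and "degree_over_Q F d" and "\<zeta> \<in> F"
  shows "\<exists>p :: rat poly. p \<noteq> 0 \<and> degree p \<le> d \<and> poly (map_poly of_rat p) \<zeta> = 0"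
proof (cases "inj_on (\<lambda>j. \<zeta> ^ j) {..d}")
  case True
  define S where "S = (\<lambda>j. \<zeta> ^ j) ` {..d}"
  have "rat_vs.dependent S"
    using assms True subfield_power_closed[OF assms(1,3)]
    by (intro degree_over_Q_dependent[OF assms(2)]) (auto simp: S_def card_image)
  then obtain u where u_nonzero: "\<exists>v\<in>S. u v \<noteq> 0" and u_sum: "(\<Sum>v\<in>S. of_rat (u v) * v) = 0"
    using rat_vs.dependent_finite[of S] by (auto simp: S_def)
  define p :: "rat poly" where "p = (\<Sum>j\<le>d. Polynomial.monom (u (\<zeta> ^ j)) j)"
  have coeff_p: "poly.coeff p k = (if k \<le> d then u (\<zeta> ^ k) else 0)" for k
    by (simp add: p_def coeff_sum)
  have "p \<noteq> 0"
  proof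
    assume "p = 0"
    then have "u (\<zeta> ^ j) = 0" if "j \<le> d" for j using that coeff_p[of j] by simp
    with u_nonzero show False by (auto simp: S_def)
  qed
  moreover have "degree p \<le> d" by (rule degree_le) (simp add: coeff_p)
  moreover have "poly (map_poly of_rat p) \<zeta> = (\<Sum>v\<in>S. of_rat (u v) * v)"
    by (simp add: p_def S_def sum.reindex[OF True] poly_sum poly_monom hom_distribs)
  ultimately show ?thesis using u_sum by (intro exI[of _ p]) simp
next
  case False
  then obtain i j where ij: "i \<le> d" "j \<le> d" "i \<noteq> j" "\<zeta> ^ i = \<zeta> ^ j"
    unfolding inj_on_def by auto
  define p :: "rat poly" where "p = Polynomial.monom 1 i - Polynomial.monom 1 j"
  have "poly.coeff p i = 1" using ij by (simp add: p_def)
  hence "p \<noteq> 0" by auto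
  moreover have "degree p \<le> d"
    unfolding p_def using ij by (intro degree_diff_le) (auto simp: degree_monom_eq)
  moreover have "poly (map_poly of_rat p) \<zeta> = 0"
    using ij by (simp add: p_def hom_distribs poly_monom)
  ultimately show ?thesis by (intro exI[of _ p]) simp
qed

lemma int_poly_root_of_rat_poly_root:
  fixes p :: "rat poly" and \<zeta> :: complex
  assumes "p \<noteq> 0" and "poly (map_poly of_rat p) \<zeta> = 0"
  shows "\<exists>q :: int poly. q \<noteq> 0 \<and> degree q = degree p \<and> poly (of_int_poly q) \<zeta> = 0"
proof -
  obtain c q where cq: "rat_to_normalized_int_poly p = (c, q)" by force
  note normalized = rat_to_normalized_int_poly[OF cq]
  have "poly (map_poly of_rat p) \<zeta> = of_rat c * poly (of_int_poly q) \<zeta>"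
    by (subst normalized(1)) (simp add: hom_distribs map_poly_map_poly o_def of_rat_of_int_eq)
  hence "poly (of_int_poly q) \<zeta> = 0" using assms(2) normalized(2) by simp
  moreover have "q \<noteq> 0" using normalized(1) assms(1) by auto
  ultimately show ?thesis using normalized(4) by blast
qed

lemma sum_sq_coeffs_X_pow_minus_one:
  assumes "n > 0"
  shows "(\<Sum>a\<leftarrow>coeffs (Polynomial.monom 1 n - 1 :: int poly). a * a) = 2"
proof -
  define f :: "int poly" where "f = Polynomial.monom 1 n - 1"
  have cf: "poly.coeff f k = (if k = n then 1 else 0) - (if k = 0 then 1 else 0)" for k
    by (simp add: f_def coeff_monom)
  have "degree f \<le> n" unfolding f_def by (intro degree_diff_le) (auto simp: degree_monom_eq)
  moreover have "poly.coeff f n \<noteq> 0" using assms by (simp add: cf mult_if_delta)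
  ultimately have df: "degree f = n" by (simp add: le_antisym le_degree)
  hence "f \<noteq> 0" using assms by auto
  hence "(\<Sum>a\<leftarrow>coeffs f. a * a) = (\<Sum>k<Suc n. poly.coeff f k * poly.coeff f k)"
    by (simp add: coeffs_def df sum_list_distinct_conv_sum_set lessThan_atLeast0 atLeastLessThan_upt[symmetric] distinct_map)
  also have "\<dots> = (\<Sum>k<n. if k = 0 then 1 else 0) + 1"
    using assms by (simp add: cf mult_if_delta)
  also have "\<dots> = 2" using assms by (simp add: sum.delta)
  finally show ?thesis unfolding f_def .
qed

lemma coeff_bound_of_dvd_X_pow_minus_one:
  fixes g :: "int poly"
  assumes "n > 0" and "g dvd Polynomial.monom 1 n - 1"
  shows "\<bar>poly.coeff g k\<bar> \<le> 2 ^ Suc (degree g)"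
proof -
  have sum_sq: "(\<Sum>a\<leftarrow>coeffs (Polynomial.monom 1 n - 1 :: int poly). a * a) = 2"
    using assms(1) by (rule sum_sq_coeffs_X_pow_minus_one)
  hence "Polynomial.monom 1 n - 1 \<noteq> (0 :: int poly)" by auto
  hence "mahler_measure g \<le> mahler_measure (Polynomial.monom 1 n - 1 :: int poly)"
    using assms(2) by (rule mahler_measure_dvd)
  also have "\<dots> \<le> sqrt 2"
    using Landau_inequality_mahler_measure[of "Polynomial.monom 1 n - 1"] sum_sq by simp
  also have "sqrt 2 \<le> (2 :: real)" using sqrt2_less_2 by simp
  finally have mahler: "mahler_measure g \<le> 2" .
  have "of_int \<bar>poly.coeff g k\<bar> \<le> real (degree g choose k) * mahler_measure g"
    by (rule Mignotte_bound)
  also have "\<dots> \<le> 2 ^ degree g * 2"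
  proof (rule mult_mono)
    show "real (degree g choose k) \<le> 2 ^ degree g"
      using of_nat_mono[OF binomial_le_pow2, where 'a = real] by simp
  qed (use mahler mahler_measure_ge_0 in auto)
  finally have "real_of_int \<bar>poly.coeff g k\<bar> \<le> real_of_int (2 ^ Suc (degree g))" by simp
  then show ?thesis by (simp only: of_int_le_iff)
qed

lemma poly_of_int_poly_gcd_eq_0:
  fixes p q :: "int poly" and \<zeta> :: complex
  assumes "poly (of_int_poly p) \<zeta> = 0" and "poly (of_int_poly q) \<zeta> = 0"
  shows "poly (of_int_poly (gcd p q)) \<zeta> = 0"
proof (cases "gcd p q = 0")
  case False
  define A B :: "rat poly" where "A = of_int_poly p" and "B = of_int_poly q"
  have to_complex: "map_poly (of_rat :: rat \<Rightarrow> complex) (of_int_poly h) = of_int_poly h" for h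
    by (subst map_poly_map_poly) (auto simp: o_def of_rat_of_int_eq)
  have "gcd A B = fst (bezout_coefficients A B) * A + snd (bezout_coefficients A B) * B"
    by (simp add: bezout_coefficients_fst_snd)
  hence "poly (map_poly of_rat (gcd A B)) \<zeta> = 0"
    using assms by (simp add: hom_distribs to_complex A_def B_def)
  moreover have "gcd A B = Polynomial.smult (inverse (of_int (lead_coeff (gcd p q)))) (of_int_poly (gcd p q))"
    unfolding A_def B_def by (rule gcd_rat_to_gcd_int)
  ultimately show ?thesis using False by (auto simp: hom_distribs to_complex)
qed simp

lemma root_of_unity_root_of_bounded_int_poly:
  fixes \<zeta> :: complex and p :: "int poly"
  assumes "\<zeta> ^ n = 1" and "n > 0"
    and "p \<noteq> 0" and "degree p \<le> d" and "poly (of_int_poly p) \<zeta> = 0"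
  shows "\<exists>g. g \<noteq> 0 \<and> degree g \<le> d \<and> (\<forall>k. \<bar>poly.coeff g k\<bar> \<le> 2 ^ Suc d)
           \<and> poly (of_int_poly g) \<zeta> = 0"
proof -
  define g where "g = gcd p (Polynomial.monom 1 n - 1)"
  have "g \<noteq> 0" using assms(3) by (simp add: g_def)
  moreover have "degree g \<le> degree p" unfolding g_def using assms(3) by (intro dvd_imp_degree_le) auto
  then have deg: "degree g \<le> d" using assms(4) by simp
  moreover have "\<bar>poly.coeff g k\<bar> \<le> 2 ^ Suc d" for k
  proof -
    have "\<bar>poly.coeff g k\<bar> \<le> 2 ^ Suc (degree g)"
      using assms(2) by (rule coeff_bound_of_dvd_X_pow_minus_one) (simp add: g_def)
    also have "\<dots> \<le> 2 ^ Suc d" using deg by (intro power_increasing) auto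
    finally show ?thesis .
  qed
  moreover have "poly (of_int_poly (Polynomial.monom 1 n - 1)) \<zeta> = 0"
    using assms(1) by (simp add: hom_distribs poly_monom)
  then have "poly (of_int_poly g) \<zeta> = 0"
    unfolding g_def using assms(5) by (rule poly_of_int_poly_gcd_eq_0[rotated])
  ultimately show ?thesis by blast
qed

lemma finite_int_polys_bounded:
  "finite {g :: int poly. degree g \<le> d \<and> (\<forall>k. \<bar>poly.coeff g k\<bar> \<le> B)}"
proof (rule finite_subset)
  show "{g :: int poly. degree g \<le> d \<and> (\<forall>k. \<bar>poly.coeff g k\<bar> \<le> B)}
      \<subseteq> Poly ` {cs. set cs \<subseteq> {-B..B} \<and> length cs \<le> Suc d}"
  proof
    fix g :: "int poly" assume g: "g \<in> {g. degree g \<le> d \<and> (\<forall>k. \<bar>poly.coeff g k\<bar> \<le> B)}"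
    have "set (coeffs g) \<subseteq> range (poly.coeff g)" unfolding range_coeff by blast
    also have "\<dots> \<subseteq> {-B..B}"
    proof clarify
      fix k
      have "\<bar>poly.coeff g k\<bar> \<le> B" using g by simp
      then show "poly.coeff g k \<in> {-B..B}" by (auto simp: abs_le_iff)
    qed
    finally have "set (coeffs g) \<subseteq> {-B..B}" .
    moreover have "length (coeffs g) \<le> Suc d"
    proof -
      have "degree g \<le> d" using g by simp
      then show ?thesis by (cases "g = 0") (simp_all add: length_coeffs_degree)
    qed
    ultimately show "g \<in> Poly ` {cs. set cs \<subseteq> {-B..B} \<and> length cs \<le> Suc d}"
      by (intro image_eqI[where x = "coeffs g"]) auto
  qed
  show "finite (Poly ` {cs. set cs \<subseteq> {-B..B} \<and> length cs \<le> Suc d})"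
    by (intro finite_imageI finite_lists_length_le) simp
qed

lemma finite_muF:
  assumes "is_subfield F" and "degree_over_Q F d"
  shows "finite (muF F)"
proof (rule finite_subset)
  define P where "P = {g :: int poly. degree g \<le> d \<and> (\<forall>k. \<bar>poly.coeff g k\<bar> \<le> 2 ^ Suc d)}"
  show "muF F \<subseteq> (\<Union>g \<in> P - {0}. {\<zeta>. poly (of_int_poly g) \<zeta> = 0})"
  proof
    fix \<zeta> assume "\<zeta> \<in> muF F"
    then obtain n where "\<zeta> \<in> F" and "n > 0" and "\<zeta> ^ n = 1" unfolding muF_def by auto
    obtain p :: "rat poly" where p: "p \<noteq> 0" "degree p \<le> d" "poly (map_poly of_rat p) \<zeta> = 0"
      using degree_over_Q_rat_poly_root[OF assms \<open>\<zeta> \<in> F\<close>] by blast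
    obtain q :: "int poly" where q: "q \<noteq> 0" "degree q = degree p" "poly (of_int_poly q) \<zeta> = 0"
      using int_poly_root_of_rat_poly_root[OF p(1,3)] by blast
    obtain g where "g \<noteq> 0" "degree g \<le> d" "\<forall>k. \<bar>poly.coeff g k\<bar> \<le> 2 ^ Suc d"
      and "poly (of_int_poly g) \<zeta> = 0"
      using root_of_unity_root_of_bounded_int_poly[OF \<open>\<zeta> ^ n = 1\<close> \<open>n > 0\<close> q(1) _ q(3)] q(2) p(2)
      by auto
    then show "\<zeta> \<in> (\<Union>g \<in> P - {0}. {\<zeta>. poly (of_int_poly g) \<zeta> = 0})"
      unfolding P_def by blast
  qed
  show "finite (\<Union>g \<in> P - {0}. {\<zeta>. poly (of_int_poly g) \<zeta> = (0 :: complex)})"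
  proof (intro finite_UN_I)
    show "finite (P - {0})" unfolding P_def using finite_int_polys_bounded by blast
    fix g assume "g \<in> P - {0}"
    then have "of_int_poly g \<noteq> (0 :: complex poly)" by simp
    then show "finite {\<zeta> :: complex. poly (of_int_poly g) \<zeta> = 0}" by (rule poly_roots_finite)
  qed
qed

section \<open>Roots of unity under the Galois action\<close>

lemma field_aut_closed: "is_field_aut F s \<Longrightarrow> a \<in> F \<Longrightarrow> s a \<in> F"
  unfolding is_field_aut_def by (auto dest: bij_betw_apply)

lemma field_aut_power:
  assumes "is_subfield F" and "is_field_aut F s" and "a \<in> F"
  shows "s (a ^ n) = s a ^ n"
proof (induction n)
  case 0
  then show ?case using assms(2) by (simp add: is_field_aut_def)
next
  case (Suc n)
  have "s (a * a ^ n) = s a * s (a ^ n)"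
    using assms subfield_power_closed[OF assms(1,3)] unfolding is_field_aut_def by blast
  then show ?case using Suc by simp
qed

lemma field_aut_muF:
  assumes "is_subfield F" and "is_field_aut F s" and "f \<in> muF F"
  shows "s f \<in> muF F"
proof -
  obtain n where "f \<in> F" and "n > 0" and "f ^ n = 1" using assms(3) unfolding muF_def by auto
  then have "s f ^ n = 1"
    using field_aut_power[OF assms(1,2)] assms(2) by (metis is_field_aut_def)
  then show ?thesis using field_aut_closed[OF assms(2) \<open>f \<in> F\<close>] \<open>n > 0\<close> unfolding muF_def by blast
qed

lemma funpow_field_aut_muF:
  assumes "is_subfield F" and "is_field_aut F s" and "f \<in> muF F"
  shows "(s ^^ k) f \<in> muF F"
  by (induction k) (simp_all add: assms field_aut_muF)

lemma norm_muF: "f \<in> muF F \<Longrightarrow> cmod f = 1"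
  unfolding muF_def by (auto dest: power_eq_1_iff)

lemma G_muF_eq:
  assumes "is_subfield F" and "is_field_aut F \<tau>" and "f \<in> muF F"
  shows "G \<tau> x y z f = G_root_of_unity x y z"
proof -
  have emb_in: "emb \<tau> i g \<in> muF F" if "g \<in> muF F" for i g
    using funpow_field_aut_muF[OF assms(1,2) that] by (simp add: emb_def)
  have unit: "cmod (emb \<tau> i f) = 1" "cmod (emb \<tau> j (emb \<tau> i f)) = 1" for i j
    by (intro norm_muF[of _ F] emb_in assms(3))+
  have "G1 \<tau> x y z (emb \<tau> i f) = exp (- 2 * pi * ((exp (2*x) - 1) + (exp (2*y) - 1) + (exp (2*z) - 1))) - 1"
    for i by (simp add: G1_def unit)
  moreover have "normsq \<tau> f = 6" by (simp add: normsq_def unit)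
  ultimately show ?thesis by (simp add: G_def G2_def G_root_of_unity_def)
qed

theorem proposition8p4:
  fixes F :: "complex set" and \<tau> :: "complex \<Rightarrow> complex" and x y z :: real
  assumes "imag_cyclic_sextic F \<tau>"
    and "x + y + z = 0"
    and "0 < wnormsq x y z" and "wnormsq x y z < 0.24163 ^ 2"
  shows "T1 F \<tau> x y z < - 98.4664 * 10 powi (-9) * real (card (muF F))"
proof -
  have F: "is_subfield F" "degree_over_Q F 6" "is_field_aut F \<tau>"
    using assms(1) unfolding imag_cyclic_sextic_def by auto
  have "1 \<in> muF F"
    using F(1) unfolding muF_def is_subfield_def by (auto intro: exI[of _ "1 :: nat"])
  then have "0 < card (muF F)" using finite_muF[OF F(1,2)] by (auto simp: card_gt_0_iff)
  then have "real (card (muF F)) * G_root_of_unity x y z < real (card (muF F)) * (- 98.4664 * 10 powi (-9))"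
    using G_root_of_unity_lt[OF assms(2-4)] by (intro mult_strict_left_mono) auto
  moreover have "T1 F \<tau> x y z = real (card (muF F)) * G_root_of_unity x y z"
    unfolding T1_def using G_muF_eq[OF F(1,3)] by simp
  ultimately show ?thesis by (simp add: mult.commute)
qed

end
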